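(* Let $\mathrm{Gr}$ be the covering-space relative $\mathbb{Q}$-grading on $\widehat{HF}(-L(p,q))$. For $0\leq i<p$, $$\mathrm{Gr}(x_{i+q\!\!\mod p},x_i)={1\over p}(p-1-2i).$$
   Context: $p>q$ are relatively prime positive integers. $-L(p,q)$ has the pointed Heegaard diagram with $\Sigma$ the torus $[0,1]\times[0,1]$ with edges identified, $\alpha$ the horizontal circle $y=1/2$, $\beta$ a circle of slope $-p/q$, and $z$ a point below $y=1/2$. The $p$ regions are $D_0,\ldots,D_{p-1}$ left to right with $z\in D_0$, and the $p$ points of $\alpha\cap\beta$ are $x_0,\ldots,x_{p-1}$ left to right along $\alpha$, with $x_0$ the upper right vertex of $D_0$. The differential vanishes so $\widehat{CF}=\widehat{HF}(-L(p,q))$. $\mathrm{Gr}(\mathbf{x},\mathbf{y})=\frac1n\mathrm{gr}(\tilde{\mathbf{x}},\tilde{\mathbf{y}})$ for any $n$-fold cover on which the lifted generators have equal $\mathrm{Spin}^c$ structure; equivalently $\mathrm{Gr}(\mathbf{x},\mathbf{y})=\frac1n[e(A)+n_\mathbf{x}(A)+n_\mathbf{y}(A)]$ for any basepoint-avoiding domain $A$ with $\partial\partial_\alpha A=n\mathbf{y}-n\mathbf{x}$. *)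

theory Defs
  imports Complex_Main
begin

text \<open>Combinatorial model of the pointed Heegaard diagram for -L(p,q)
 (torus, alpha horizontal at y=1/2, beta of slope -p/q).
 Regions D_0..D_{p-1} (indices mod p), intersection points x_0..x_{p-1}
 (indices mod p, left to right along alpha).  The alpha circle is cut into the
 p edges e_m = [x_{m-1}, x_m] (m mod p), oriented left to right.
 Region D_j lies directly below edge e_j and directly above edge e_{j+q}.
 A domain is an integer combination of regions, given by its coefficient
 function (only the values at 0..p-1 matter).\<close>

text \<open>Each region is an embedded quadrilateral (a disc) with four convex corners.\<close>
definition region_euler_char :: "nat \<Rightarrow> nat \<Rightarrow> nat \<Rightarrow> real" where
  "region_euler_char p q j = 1"

definition region_convex_corners :: "nat \<Rightarrow> nat \<Rightarrow> nat \<Rightarrow> nat" where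
  "region_convex_corners p q j = 4"

definition euler_measure :: "nat \<Rightarrow> nat \<Rightarrow> (nat \<Rightarrow> int) \<Rightarrow> real" where
  "euler_measure p q A =
     (\<Sum>j<p. of_int (A j) * (region_euler_char p q j - real (region_convex_corners p q j) / 4))"

text \<open>Point measure n_{x_k}(A): average of the coefficients of the four quadrants at x_k:
 below-left D_k, below-right D_{k+1}, above-left D_{k-q}, above-right D_{k+1-q}.\<close>
definition point_measure :: "nat \<Rightarrow> nat \<Rightarrow> (nat \<Rightarrow> int) \<Rightarrow> nat \<Rightarrow> real" where
  "point_measure p q A k =
     (of_int (A (k mod p)) + of_int (A ((k + 1) mod p))
      + of_int (A ((k + p - q) mod p)) + of_int (A ((k + 1 + p - q) mod p))) / 4"

text \<open>Alpha part of the boundary of A, as coefficient on edge e_m: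
 the region below e_m (namely D_m) traverses it right-to-left, the region above
 (namely D_{m-q}) traverses it left-to-right.\<close>
definition alpha_boundary :: "nat \<Rightarrow> nat \<Rightarrow> (nat \<Rightarrow> int) \<Rightarrow> nat \<Rightarrow> int" where
  "alpha_boundary p q A m = A ((m + p - q) mod p) - A (m mod p)"

text \<open>Boundary of the alpha-boundary, as a coefficient on x_k: d e_m = x_m - x_{m-1}.\<close>
definition dd_alpha :: "nat \<Rightarrow> nat \<Rightarrow> (nat \<Rightarrow> int) \<Rightarrow> nat \<Rightarrow> int" where
  "dd_alpha p q A k = alpha_boundary p q A (k mod p) - alpha_boundary p q A ((k + 1) mod p)"

text \<open>Basepoint z lies in D_0.\<close>
definition basepoint_avoiding :: "(nat \<Rightarrow> int) \<Rightarrow> bool" where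
  "basepoint_avoiding A \<longleftrightarrow> A 0 = 0"

definition Gr :: "nat \<Rightarrow> nat \<Rightarrow> nat \<Rightarrow> nat \<Rightarrow> real" where
  "Gr p q a b = (THE r. \<exists>n::nat. n > 0 \<and> (\<exists>A. basepoint_avoiding A \<and>
      (\<forall>k<p. dd_alpha p q A k = int n * ((if k = b then 1 else 0) - (if k = a then 1 else 0))) \<and>
      r = (euler_measure p q A + point_measure p q A a + point_measure p q A b) / real n))"

end

theory Submission
  imports Defs
begin

(* Two basepoint-avoiding domains realising Gr(x_a, x_b) are proportional: a suitable combination D
   of them has vanishing dd_alpha, so its alpha-boundary is a constant c and D drops by c along the
   orbit 0, q, 2q, ... of translation by q. Going once around the orbit forces c = 0, and since q
   generates Z/p, D is constant, hence zero as it vanishes on D_0. Gr can therefore be read off one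
   explicit domain. Its Euler measure vanishes because every region is a square, and its point
   measures at x_i and x_(i+q) add up to p - 1 - 2i. *)

lemma mod_diff_bounded:
  fixes x c p :: int
  assumes "0 \<le> c" "c \<le> p" "0 < p"
  shows "(x - c) mod p = x mod p - c + (if x mod p < c then p else 0)"
proof -
  define y where "y = x mod p - c + (if x mod p < c then p else 0)"
  have "0 \<le> x mod p" "x mod p < p" using \<open>0 < p\<close> by simp_all
  then have "0 \<le> y" "y < p" unfolding y_def using assms by (split if_split; linarith)+
  then have "y mod p = y" by (simp add: mod_pos_pos_trivial)
  moreover have "(x - c) mod p = y mod p" unfolding y_def by (simp add: mod_diff_left_eq)
  ultimately show ?thesis unfolding y_def by simp
qed

lemma euler_measure_eq_0: "euler_measure p q A = 0"
  by (simp add: euler_measure_def region_euler_char_def region_convex_corners_def)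

lemma alpha_boundary_mod:
  assumes "q \<le> p"
  shows "alpha_boundary p q A (m mod p) = alpha_boundary p q A m"
proof -
  have "(m mod p + p - q) mod p = (m + p - q) mod p"
    using assms by (simp add: mod_add_left_eq flip: Nat.add_diff_assoc)
  then show ?thesis by (simp add: alpha_boundary_def)
qed

lemma dd_alpha_lincomb:
  "dd_alpha p q (\<lambda>m. x * A m - y * E m) k = x * dd_alpha p q A k - y * dd_alpha p q E k"
  by (simp add: dd_alpha_def alpha_boundary_def algebra_simps)

lemma dd_alpha_eq_0_imp_alpha_boundary_const:
  assumes "q \<le> p" "0 < p" "\<forall>k<p. dd_alpha p q A k = 0"
  shows "alpha_boundary p q A m = alpha_boundary p q A 0"
proof -
  have "alpha_boundary p q A k = alpha_boundary p q A 0" if "k < p" for k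
    using that
  proof (induction k)
    case (Suc k)
    then have "dd_alpha p q A k = 0" using assms(3) by simp
    then show ?case
      using Suc by (simp add: dd_alpha_def alpha_boundary_mod[OF assms(1)])
  qed simp
  then show ?thesis
    using assms(2) by (metis alpha_boundary_mod[OF assms(1)] mod_less_divisor)
qed

lemma domain_along_multiples_of_q:
  assumes "\<forall>m. alpha_boundary p q A m = c"
  shows "A (k * q mod p) = A 0 - int k * c"
proof (induction k)
  case (Suc k)
  have "alpha_boundary p q A (k * q mod p + q) = c" using assms by simp
  moreover have "(k * q mod p + q) mod p = Suc k * q mod p"
    by (simp add: mod_add_left_eq mod_add_right_eq add.commute)
  ultimately have "A (k * q mod p) - A (Suc k * q mod p) = c"
    by (simp add: alpha_boundary_def)
  with Suc show ?case by (simp add: algebra_simps)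
qed simp

lemma exists_mult_mod_eq:
  fixes p q m :: nat
  assumes "0 < q" "coprime p q"
  shows "\<exists>k. k * q mod p = m mod p"
proof -
  obtain x y where xy: "q * x = p * y + 1"
    using bezout_nat[of q p] assms by (auto simp: coprime_iff_gcd_eq_1 gcd.commute)
  have "(m * x) * q = m * (q * x)" by (simp add: ac_simps)
  also have "\<dots> = m + p * (y * m)" by (simp add: xy algebra_simps)
  finally have "(m * x) * q mod p = m mod p" by simp
  then show ?thesis ..
qed

lemma dd_alpha_eq_0_imp_const:
  assumes "0 < q" "q \<le> p" "coprime p q" "\<forall>k<p. dd_alpha p q A k = 0" "m < p"
  shows "A m = A 0"
proof -
  have "0 < p" using assms(5) by simp
  define c where "c = alpha_boundary p q A 0"
  have orbit: "A (k * q mod p) = A 0 - int k * c" for k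
    using domain_along_multiples_of_q dd_alpha_eq_0_imp_alpha_boundary_const[OF assms(2) \<open>0 < p\<close> assms(4)]
    unfolding c_def by blast
  from orbit[of p] \<open>0 < p\<close> have "c = 0" by simp
  obtain k where "k * q mod p = m"
    using exists_mult_mod_eq[OF assms(1,3), of m] assms(5) by auto
  then show ?thesis using orbit[of k] \<open>c = 0\<close> by simp
qed

lemma point_measure_scale:
  assumes "\<forall>m<p. x * A m = y * E m" "0 < p"
  shows "of_int x * point_measure p q A k = of_int y * point_measure p q E k"
proof -
  have "of_int x * real_of_int (A (m mod p)) = of_int y * real_of_int (E (m mod p))" for m
    using assms by (metis of_int_mult mod_less_divisor)
  then show ?thesis
    unfolding point_measure_def by (simp add: field_simps)
qed

lemma Gr_eq_via_domain:
  assumes "0 < q" "q \<le> p" "coprime p q" "basepoint_avoiding E" "0 < N"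
    and dd_E: "\<forall>k<p. dd_alpha p q E k = int N * ((if k = b then 1 else 0) - (if k = a then 1 else 0))"
  shows "Gr p q a b = (point_measure p q E a + point_measure p q E b) / real N"
  unfolding Gr_def
proof (rule the_equality)
  fix r assume "\<exists>n::nat. n > 0 \<and> (\<exists>A. basepoint_avoiding A \<and>
      (\<forall>k<p. dd_alpha p q A k = int n * ((if k = b then 1 else 0) - (if k = a then 1 else 0))) \<and>
      r = (euler_measure p q A + point_measure p q A a + point_measure p q A b) / real n)"
  then obtain n A where "0 < n" "basepoint_avoiding A"
    and dd_A: "\<forall>k<p. dd_alpha p q A k = int n * ((if k = b then 1 else 0) - (if k = a then 1 else 0))"
    and r: "r = (point_measure p q A a + point_measure p q A b) / real n"
    by (auto simp: euler_measure_eq_0)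
  have "0 < p" using assms(1,2) by simp
  let ?D = "\<lambda>m. int N * A m - int n * E m"
  have "\<forall>k<p. dd_alpha p q ?D k = 0"
    using dd_A dd_E by (simp add: dd_alpha_lincomb)
  then have "\<forall>m<p. ?D m = ?D 0"
    using dd_alpha_eq_0_imp_const[OF assms(1-3)] by blast
  then have "\<forall>m<p. int N * A m = int n * E m"
    using \<open>basepoint_avoiding A\<close> \<open>basepoint_avoiding E\<close> by (simp add: basepoint_avoiding_def)
  then have "real N * point_measure p q A k = real n * point_measure p q E k" for k
    using point_measure_scale[of p "int N" A "int n" E q k] \<open>0 < p\<close> by simp
  then show "r = (point_measure p q E a + point_measure p q E b) / real N"
    unfolding r using \<open>0 < n\<close> \<open>0 < N\<close> by (simp add: field_simps)
qed (use assms in \<open>intro exI[of _ N] conjI exI[of _ E]; simp add: euler_measure_eq_0\<close>)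

(* On 0 \<le> m < p this is p * [i < m] - m; the mod form extends it p-periodically. *)
definition standard_domain :: "nat \<Rightarrow> nat \<Rightarrow> nat \<Rightarrow> int" where
  "standard_domain p i m = int p - 1 - int i - (int m - int i - 1) mod int p"

lemma standard_domain_mod: "standard_domain p i (m mod p) = standard_domain p i m"
  by (simp add: standard_domain_def zmod_int mod_simps diff_diff_eq)

lemma standard_domain_offset:
  assumes "0 < d" "d \<le> p"
  shows "standard_domain p i ((i + d) mod p) = int p - int i - int d"
proof -
  have "(int d - 1) mod int p = int d - 1" using assms by simp
  then show ?thesis unfolding standard_domain_mod by (simp add: standard_domain_def)
qed

lemma alpha_boundary_standard_domain:
  assumes "q \<le> p" "0 < p"
  shows "alpha_boundary p q (standard_domain p i) m
    = int q - (if (int m - int i - 1) mod int p < int q then int p else 0)"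
proof -
  have "(int m + int p - int q - int i - 1) mod int p = ((int m - int i - 1 - int q) + int p) mod int p"
    by (simp add: algebra_simps)
  then have "alpha_boundary p q (standard_domain p i) m
      = (int m - int i - 1) mod int p - (int m - int i - 1 - int q) mod int p"
    unfolding alpha_boundary_def standard_domain_mod using assms
    by (simp add: standard_domain_def of_nat_diff)
  then show ?thesis using assms by (simp add: mod_diff_bounded)
qed

lemma dd_alpha_standard_domain:
  assumes "0 < q" "q < p" "i < p" "k < p"
  shows "dd_alpha p q (standard_domain p i) k
    = int p * ((if k = i then 1 else 0) - (if k = (i + q) mod p then 1 else 0))"
proof -
  define s where "s = (int k - int i) mod int p"
  have "(int ((k + 1) mod p) - int i - 1) mod int p = s"
    unfolding s_def by (simp add: zmod_int mod_simps diff_diff_eq)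
  then have succ: "alpha_boundary p q (standard_domain p i) ((k + 1) mod p)
      = int q - (if s < int q then int p else 0)"
    using assms by (simp add: alpha_boundary_standard_domain)
  have "(int k - int i - 1) mod int p = s - 1 + (if s < 1 then int p else 0)"
    unfolding s_def using assms by (simp add: mod_diff_bounded)
  then have pred: "alpha_boundary p q (standard_domain p i) (k mod p)
      = int q - (if s - 1 + (if s < 1 then int p else 0) < int q then int p else 0)"
    using assms by (simp add: alpha_boundary_standard_domain)
  have s: "s = int k - int i + (if k < i then int p else 0)"
    unfolding s_def using assms by (simp add: mod_diff_bounded)
  then have "0 \<le> s" "s < int p" "s = 0 \<longleftrightarrow> k = i"
    using assms by auto
  moreover have "(i + q) mod p = (if i + q < p then i + q else i + q - p)"
    using assms by (simp add: le_mod_geq)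
  then have "s = int q \<longleftrightarrow> k = (i + q) mod p"
    using assms s by auto
  ultimately show ?thesis
    unfolding dd_alpha_def succ pred using assms by auto
qed

lemma point_measure_standard_domain:
  assumes "0 < q" "q < p" "i < p"
  shows "point_measure p q (standard_domain p i) ((i + q) mod p)
       + point_measure p q (standard_domain p i) i = real p - 1 - 2 * real i"
proof -
  have shift: "(x mod p + c) mod p = (x + c) mod p" for x c :: nat
    by (rule mod_add_left_eq)
  have "i + p - q = i + (p - q)" "i + 1 + p - q = i + (p - q + 1)"
      "(i + q) mod p + p - q = (i + q) mod p + (p - q)"
      "(i + q) mod p + 1 + p - q = (i + q) mod p + (p - q + 1)"
      "i + q + 1 = i + (q + 1)" "i + q + (p - q) = i + p" "i + q + (p - q + 1) = i + 1 + p"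
    using assms by simp_all
  then have idx: "i mod p = (i + p) mod p"
      "(i + p - q) mod p = (i + (p - q)) mod p"
      "(i + 1 + p - q) mod p = (i + (p - q + 1)) mod p"
      "(i + q) mod p mod p = (i + q) mod p"
      "((i + q) mod p + 1) mod p = (i + (q + 1)) mod p"
      "((i + q) mod p + p - q) mod p = (i + p) mod p"
      "((i + q) mod p + 1 + p - q) mod p = (i + 1) mod p"
    by (simp_all only: shift mod_mod_trivial mod_add_self2)
  have "standard_domain p i ((i + p) mod p) = - int i"
      "standard_domain p i ((i + 1) mod p) = int p - int i - 1"
      "standard_domain p i ((i + (p - q)) mod p) = int q - int i"
      "standard_domain p i ((i + (p - q + 1)) mod p) = int q - int i - 1"
      "standard_domain p i ((i + q) mod p) = int p - int i - int q"
      "standard_domain p i ((i + (q + 1)) mod p) = int p - int i - int q - 1"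
    using standard_domain_offset[of p p i] standard_domain_offset[of 1 p i]
      standard_domain_offset[of "p - q" p i] standard_domain_offset[of "p - q + 1" p i]
      standard_domain_offset[of q p i] standard_domain_offset[of "q + 1" p i] assms
    by simp_all
  then show ?thesis
    unfolding point_measure_def idx by (simp add: field_simps)
qed

theorem proposition5p3:
  fixes p q i :: nat
  assumes "0 < q" and "q < p" and "coprime p q" and "i < p"
  shows "Gr p q ((i + q) mod p) i = (real p - 1 - 2 * real i) / real p"
proof -
  have "basepoint_avoiding (standard_domain p i)"
    using standard_domain_offset[of "p - i" p i] assms by (simp add: basepoint_avoiding_def)
  moreover have "\<forall>k<p. dd_alpha p q (standard_domain p i) k
      = int p * ((if k = i then 1 else 0) - (if k = (i + q) mod p then 1 else 0))"
    using assms by (simp add: dd_alpha_standard_domain)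
  ultimately have "Gr p q ((i + q) mod p) i
      = (point_measure p q (standard_domain p i) ((i + q) mod p)
         + point_measure p q (standard_domain p i) i) / real p"
    using assms by (intro Gr_eq_via_domain) simp_all
  then show ?thesis
    using point_measure_standard_domain assms by simp
qed

end
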